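(* There are absolute constants $c^*,\kappa>0$ such that for every $k\ge1$, every random variable $Y$ in $[0,1]^k$ with $Y_1\le\dots\le Y_k$ almost surely, and every $s>0$, $$D^{(q)}(r\,|\,Y,\|\cdot\|_\infty,s)\le\frac{\kappa}{k}e^{-r/k}\qquad\text{for all }r\ge c^*k.$$
   Context: $D^{(q)}(r\,|\,Y,\|\cdot\|_\infty,s)=\inf\{(\mathbb E\min_{a\in\mathcal C}\|Y-a\|_\infty^s)^{1/s}:\mathcal C\subset\mathbb R^k\text{ finite},\ \log\#\mathcal C\le r\}$ (natural log). *)

theory Defs
  imports "HOL-Probability.Probability"
begin

text \<open>Vectors of R^k are represented as functions nat => real; only the
coordinates i < k are relevant. A random vector Y is represented by its law,
a probability measure on the product space PiM {..<k} (\<lambda>_. borel).\<close>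

definition linf_dist :: "nat \<Rightarrow> (nat \<Rightarrow> real) \<Rightarrow> (nat \<Rightarrow> real) \<Rightarrow> real" where
  "linf_dist k x a = (MAX i\<in>{..<k}. \<bar>x i - a i\<bar>)"

definition quant_err :: "nat \<Rightarrow> (nat \<Rightarrow> real) measure \<Rightarrow> real \<Rightarrow> (nat \<Rightarrow> real) set \<Rightarrow> real" where
  "quant_err k M s C = (\<integral>x. (MIN a\<in>C. linf_dist k x a) powr s \<partial>M) powr (1 / s)"

definition Dq :: "nat \<Rightarrow> (nat \<Rightarrow> real) measure \<Rightarrow> real \<Rightarrow> real \<Rightarrow> real" where
  "Dq k M s r = Inf {quant_err k M s C | C. finite C \<and> C \<noteq> {} \<and> ln (real (card C)) \<le> r}"

end

theory Submission
  imports Defs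
begin

text \<open>Quantize with the grid of nondecreasing vectors in \<open>(1/m)\<int>\<^sup>k \<inter> [0,1]\<^sup>k\<close>: rounding each
coordinate of a nondecreasing \<open>Y\<close> down to \<open>(1/m)\<int>\<close> keeps it nondecreasing and moves it by at
most \<open>1/m\<close> in the sup-norm. Through \<open>f \<mapsto> {f\<^sub>i + i}\<close> such grid vectors inject into the
\<open>k\<close>-subsets of \<open>{0,\<dots>,m+k-1}\<close>, so there are at most \<open>C(m+k,k) \<le> (e(m+k)/k)\<^sup>k\<close> of them.
Choosing \<open>m \<approx> k exp(r/k) / (2e)\<close> makes this at most \<open>exp r\<close> as soon as \<open>r \<ge> 3k\<close>, while the
error \<open>1/m\<close> is at most \<open>(2e/k) exp(-r/k)\<close>.\<close>

lemma strict_mono_on_lessThan_eq_if_image_eq: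
  fixes f g :: "nat \<Rightarrow> 'a::linorder"
  assumes "strict_mono_on {..<k} f" "strict_mono_on {..<k} g"
    and "f ` {..<k} = g ` {..<k}" and "i < k"
  shows "f i = g i"
proof -
  have "sorted_wrt (<) (map h [0..<k])" if "strict_mono_on {..<k} h" for h :: "nat \<Rightarrow> 'a"
    using that by (auto simp: sorted_wrt_iff_nth_less strict_mono_on_def)
  then have "map f [0..<k] = map g [0..<k]"
    using assms(1-3) by (intro strict_sorted_equal) (auto simp flip: atLeast0LessThan)
  then show ?thesis
    using \<open>i < k\<close> by (metis add_0 diff_zero nth_map_upt)
qed

text \<open>The coordinates \<open>i \<ge> k\<close> are pinned to \<open>0\<close> so that the grid is a finite set of functions.\<close>

definition mono_grid :: "nat \<Rightarrow> nat \<Rightarrow> (nat \<Rightarrow> nat) set" where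
  "mono_grid k m = {f. (\<forall>i j. i \<le> j \<longrightarrow> j < k \<longrightarrow> f i \<le> f j) \<and> (\<forall>i<k. f i \<le> m) \<and> (\<forall>i\<ge>k. f i = 0)}"

lemma strict_mono_on_shift_mono_grid:
  assumes "f \<in> mono_grid k m"
  shows "strict_mono_on {..<k} (\<lambda>i. f i + i)"
  using assms unfolding mono_grid_def strict_mono_on_def
  by (metis (no_types, lifting) add_le_less_mono lessThan_iff mem_Collect_eq order_less_imp_le)

lemma mono_grid_shift_image:
  shows "inj_on (\<lambda>f. (\<lambda>i. f i + i) ` {..<k}) (mono_grid k m)"
    and "(\<lambda>f. (\<lambda>i. f i + i) ` {..<k}) ` mono_grid k m \<subseteq> {K \<in> Pow {0..<m + k}. card K = k}"
proof -
  show "inj_on (\<lambda>f. (\<lambda>i. f i + i) ` {..<k}) (mono_grid k m)"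
  proof (rule inj_onI, rule ext)
    fix f g i
    assume f: "f \<in> mono_grid k m" and g: "g \<in> mono_grid k m"
      and eq: "(\<lambda>i. f i + i) ` {..<k} = (\<lambda>i. g i + i) ` {..<k}"
    show "f i = g i"
    proof (cases "i < k")
      case True
      then show ?thesis
        using strict_mono_on_lessThan_eq_if_image_eq[OF strict_mono_on_shift_mono_grid[OF f]
            strict_mono_on_shift_mono_grid[OF g] eq] by simp
    qed (use f g in \<open>simp add: mono_grid_def\<close>)
  qed
  show "(\<lambda>f. (\<lambda>i. f i + i) ` {..<k}) ` mono_grid k m \<subseteq> {K \<in> Pow {0..<m + k}. card K = k}"
  proof (rule image_subsetI)
    fix f assume f: "f \<in> mono_grid k m"
    have "(\<lambda>i. f i + i) ` {..<k} \<subseteq> {0..<m + k}"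
      using f by (auto simp: mono_grid_def intro: add_le_less_mono)
    moreover have "card ((\<lambda>i. f i + i) ` {..<k}) = k"
      using strict_mono_on_imp_inj_on[OF strict_mono_on_shift_mono_grid[OF f]]
      by (simp add: card_image)
    ultimately show "(\<lambda>i. f i + i) ` {..<k} \<in> {K \<in> Pow {0..<m + k}. card K = k}"
      by simp
  qed
qed

lemma finite_mono_grid: "finite (mono_grid k m)"
  using mono_grid_shift_image by (rule inj_on_finite) simp

lemma card_mono_grid_le: "card (mono_grid k m) \<le> (m + k) choose k"
  unfolding binomial_def using mono_grid_shift_image by (rule card_inj_on_le) simp

lemma power_le_exp_mult_fact:
  fixes x :: real
  assumes "0 \<le> x"
  shows "x ^ n \<le> exp x * fact n"
proof -
  have "(\<Sum>j\<in>{n}. x ^ j /\<^sub>R fact j) \<le> (\<Sum>j. x ^ j /\<^sub>R fact j)"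
    using exp_converges[of x] assms by (intro sum_le_suminf) (auto simp: sums_iff)
  then have "x ^ n / fact n \<le> exp x"
    using exp_converges[of x] by (simp add: sums_iff divide_inverse mult.commute)
  then show ?thesis
    by (simp add: divide_le_eq mult.commute)
qed

lemma binomial_le_exp_pow:
  assumes "0 < k"
  shows "real (n choose k) \<le> (exp 1 * real n / real k) ^ k"
proof -
  have "real (n choose k) * real k ^ k \<le> real (n choose k) * (exp 1 ^ k * fact k)"
    using power_le_exp_mult_fact[of "real k" k]
    by (intro mult_left_mono) (simp_all flip: exp_of_nat_mult)
  also have "\<dots> = exp 1 ^ k * (real (n choose k) * fact k)"
    by simp
  also have "\<dots> \<le> exp 1 ^ k * real n ^ k"
    using binomial_fact_pow[of n k]
    by (intro mult_left_mono) (metis of_nat_fact of_nat_le_iff of_nat_mult of_nat_power, simp)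
  finally show ?thesis
    using assms by (simp add: field_simps)
qed

lemma binomial_ceiling_le_exp:
  fixes t :: real
  assumes k: "1 \<le> k" and t: "3 \<le> t"
  defines "m \<equiv> nat \<lceil>real k * exp t / (2 * exp 1)\<rceil>"
  shows "real ((m + k) choose k) \<le> exp (real k * t)"
proof -
  have "2 \<le> exp (1::real)" "2 \<le> exp (t - 2)"
    using exp_ge_add_one_self[of 1] exp_ge_add_one_self[of "t - 2"] t by linarith+
  then have "2 * 2 \<le> exp 1 * exp (t - 2)"
    by (intro mult_mono) auto
  then have "4 * exp 1 \<le> exp 1 * (exp 1 * exp (t - 2))"
    by simp
  also have "\<dots> = exp t"
    by (simp flip: exp_add)
  finally have exp_t: "4 * exp 1 \<le> exp t" .
  have "real m \<le> real k * exp t / (2 * exp 1) + 1"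
    unfolding m_def by (simp add: ceiling_correct)
  then have "exp 1 * real (m + k) \<le> exp 1 * (real k * exp t / (2 * exp 1) + 1 + real k)"
    by (intro mult_left_mono) auto
  also have "\<dots> = real k * exp t / 2 + exp 1 * (1 + real k)"
    by (simp add: field_simps)
  also have "\<dots> \<le> real k * exp t / 2 + exp 1 * (2 * real k)"
    using k by (intro add_left_mono mult_left_mono) auto
  also have "\<dots> \<le> real k * exp t"
    using mult_left_mono[OF exp_t, of "real k"] by (simp add: field_simps)
  finally have base: "exp 1 * real (m + k) / real k \<le> exp t"
    using k by (simp add: divide_le_eq mult.commute)
  have "real ((m + k) choose k) \<le> (exp 1 * real (m + k) / real k) ^ k"
    using k by (intro binomial_le_exp_pow) simp
  also have "\<dots> \<le> exp t ^ k"
    using base by (rule power_mono) simp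
  also have "\<dots> = exp (real k * t)"
    by (simp add: exp_of_nat_mult)
  finally show ?thesis .
qed

lemma linf_dist_nonneg:
  assumes "0 < k"
  shows "0 \<le> linf_dist k x a"
proof -
  have "\<bar>x 0 - a 0\<bar> \<le> linf_dist k x a"
    unfolding linf_dist_def using assms by (intro Max_ge) auto
  then show ?thesis
    by linarith
qed

lemma linf_dist_le:
  assumes "0 < k" and "\<And>i. i < k \<Longrightarrow> \<bar>x i - a i\<bar> \<le> \<delta>"
  shows "linf_dist k x a \<le> \<delta>"
  unfolding linf_dist_def using assms by (auto simp: lessThan_empty_iff intro!: Max.boundedI)

definition mono_codebook :: "nat \<Rightarrow> nat \<Rightarrow> (nat \<Rightarrow> real) set" where
  "mono_codebook k m = (\<lambda>f i. real (f i) / real m) ` mono_grid k m"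

lemma finite_mono_codebook: "finite (mono_codebook k m)"
  unfolding mono_codebook_def using finite_mono_grid by simp

lemma mono_codebook_nonempty: "mono_codebook k m \<noteq> {}"
proof -
  have "(\<lambda>_. 0) \<in> mono_grid k m"
    by (simp add: mono_grid_def)
  then show ?thesis
    unfolding mono_codebook_def by blast
qed

lemma card_mono_codebook_le: "card (mono_codebook k m) \<le> (m + k) choose k"
  unfolding mono_codebook_def
  using card_image_le[OF finite_mono_grid] card_mono_grid_le by (rule le_trans)

lemma ln_card_mono_codebook_le:
  fixes t :: real
  assumes "1 \<le> k" and "3 \<le> t"
  shows "ln (real (card (mono_codebook k (nat \<lceil>real k * exp t / (2 * exp 1)\<rceil>)))) \<le> real k * t"
proof -
  let ?C = "mono_codebook k (nat \<lceil>real k * exp t / (2 * exp 1)\<rceil>)"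
  have "0 < card ?C"
    using finite_mono_codebook mono_codebook_nonempty by (simp add: card_gt_0_iff)
  moreover have "real (card ?C) \<le> exp (real k * t)"
    using card_mono_codebook_le binomial_ceiling_le_exp[OF assms] of_nat_mono order_trans by blast
  ultimately show ?thesis
    by (metis exp_gt_zero ln_exp ln_le_cancel_iff of_nat_0_less_iff)
qed

lemma mono_codebook_covers:
  assumes k: "0 < k" and m: "0 < m"
    and x_unit: "\<forall>i<k. 0 \<le> x i \<and> x i \<le> 1"
    and x_mono: "\<forall>i j. i \<le> j \<longrightarrow> j < k \<longrightarrow> x i \<le> x j"
  shows "\<exists>a\<in>mono_codebook k m. linf_dist k x a \<le> 1 / real m"
proof -
  define f where "f i = (if i < k then nat \<lfloor>x i * real m\<rfloor> else 0)" for i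
  have "f \<in> mono_grid k m"
    unfolding mono_grid_def
  proof (intro CollectI conjI allI impI)
    fix i j assume "i \<le> j" "j < k"
    then show "f i \<le> f j"
      using x_mono unfolding f_def by (auto intro!: nat_mono floor_mono mult_right_mono)
  next
    fix i assume "i < k"
    then have "x i * real m \<le> real m"
      using x_unit by (simp add: mult_left_le_one_le)
    then have "\<lfloor>x i * real m\<rfloor> \<le> int m"
      by (metis floor_mono floor_of_nat)
    then show "f i \<le> m"
      using \<open>i < k\<close> unfolding f_def by simp
  qed (simp add: f_def)
  moreover have "linf_dist k x (\<lambda>i. real (f i) / real m) \<le> 1 / real m"
  proof (rule linf_dist_le[OF k])
    fix i assume "i < k"
    then have "real (f i) = of_int \<lfloor>x i * real m\<rfloor>"
      using x_unit by (simp add: f_def)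
    then have "\<bar>x i * real m - real (f i)\<bar> \<le> 1"
      by linarith
    moreover have "x i - real (f i) / real m = (x i * real m - real (f i)) / real m"
      using m by (simp add: field_simps)
    ultimately show "\<bar>x i - real (f i) / real m\<bar> \<le> 1 / real m"
      by (simp add: abs_divide divide_right_mono)
  qed
  ultimately show ?thesis
    unfolding mono_codebook_def by blast
qed

lemma Dq_le_quant_err:
  assumes "finite C" and "C \<noteq> {}" and "ln (real (card C)) \<le> r"
  shows "Dq k M s r \<le> quant_err k M s C"
  unfolding Dq_def
  by (rule cInf_lower) (use assms in \<open>auto simp: quant_err_def intro!: bdd_belowI[of _ 0]\<close>)

lemma quant_err_le:
  assumes "prob_space M" and "finite C" and "0 < k" and "0 < s" and "0 \<le> \<delta>"
    and cover: "AE x in M. \<exists>a\<in>C. linf_dist k x a \<le> \<delta>"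
  shows "quant_err k M s C \<le> \<delta>"
proof -
  interpret prob_space M by fact
  have "(\<integral>x. (MIN a\<in>C. linf_dist k x a) powr s \<partial>M) \<le> (\<integral>x. \<delta> powr s \<partial>M)"
  proof (rule integral_mono_AE')
    show "AE x in M. (MIN a\<in>C. linf_dist k x a) powr s \<le> \<delta> powr s"
      using cover
    proof eventually_elim
      case (elim x)
      then obtain a where a: "a \<in> C" "linf_dist k x a \<le> \<delta>"
        by blast
      then have "(MIN a\<in>C. linf_dist k x a) \<le> \<delta>"
        using \<open>finite C\<close> by (meson Min_le finite_imageI imageI order_trans)
      moreover have "0 \<le> (MIN a\<in>C. linf_dist k x a)"
        using \<open>finite C\<close> a(1) linf_dist_nonneg[OF \<open>0 < k\<close>] by (subst Min_ge_iff) auto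
      ultimately show ?case
        using \<open>0 < s\<close> by (intro powr_mono2) auto
    qed
  qed simp_all
  then have "(\<integral>x. (MIN a\<in>C. linf_dist k x a) powr s \<partial>M) \<le> \<delta> powr s"
    by (simp add: prob_space)
  then have "quant_err k M s C \<le> (\<delta> powr s) powr (1 / s)"
    unfolding quant_err_def using \<open>0 < s\<close> by (intro powr_mono2) (auto intro: integral_nonneg)
  also have "\<dots> = \<delta>"
    using \<open>0 < s\<close> \<open>0 \<le> \<delta>\<close> by (simp add: powr_powr)
  finally show ?thesis .
qed

theorem lemma4:
  shows "\<exists>cstar::real. \<exists>\<kappa>::real. cstar > 0 \<and> \<kappa> > 0 \<and>
    (\<forall>(k::nat) (M::(nat \<Rightarrow> real) measure) (s::real) (r::real).
       k \<ge> 1 \<longrightarrow> prob_space M \<longrightarrow>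
       sets M = sets (PiM {..<k} (\<lambda>_. borel)) \<longrightarrow>
       (AE x in M. (\<forall>i<k. 0 \<le> x i \<and> x i \<le> 1) \<and> (\<forall>i j. i \<le> j \<longrightarrow> j < k \<longrightarrow> x i \<le> x j)) \<longrightarrow>
       s > 0 \<longrightarrow> r \<ge> cstar * real k \<longrightarrow>
       Dq k M s r \<le> \<kappa> / real k * exp (- r / real k))"
proof (intro exI conjI allI impI)
  show "(3::real) > 0" and "2 * exp 1 > (0::real)"
    by simp_all
  fix k :: nat and M :: "(nat \<Rightarrow> real) measure" and s r :: real
  assume k: "k \<ge> 1" and M: "prob_space M" and "sets M = sets (PiM {..<k} (\<lambda>_. borel))"
    and Y: "AE x in M. (\<forall>i<k. 0 \<le> x i \<and> x i \<le> 1) \<and> (\<forall>i j. i \<le> j \<longrightarrow> j < k \<longrightarrow> x i \<le> x j)"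
    and s: "s > 0" and r: "r \<ge> 3 * real k"
  define t where "t = r / real k"
  define m where "m = nat \<lceil>real k * exp t / (2 * exp 1)\<rceil>"
  have t: "3 \<le> t" and r_eq: "r = real k * t"
    using r k by (simp_all add: t_def le_divide_eq)
  have m_ge: "real k * exp t / (2 * exp 1) \<le> real m"
    unfolding m_def by (rule real_nat_ceiling_ge)
  moreover have "0 < real k * exp t / (2 * exp 1)"
    using k by simp
  ultimately have m_pos: "0 < m"
    by linarith
  have "Dq k M s r \<le> quant_err k M s (mono_codebook k m)"
    using finite_mono_codebook mono_codebook_nonempty ln_card_mono_codebook_le[OF k t]
    by (intro Dq_le_quant_err) (simp_all add: m_def r_eq)
  also have "\<dots> \<le> 1 / real m"
  proof (rule quant_err_le[OF M finite_mono_codebook])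
    show "AE x in M. \<exists>a\<in>mono_codebook k m. linf_dist k x a \<le> 1 / real m"
      using Y by eventually_elim (use mono_codebook_covers k m_pos in auto)
  qed (use k s in simp_all)
  also have "\<dots> \<le> 2 * exp 1 / real k * exp (- r / real k)"
    using m_ge m_pos k by (simp add: t_def exp_minus divide_simps) (simp add: field_simps)
  finally show "Dq k M s r \<le> 2 * exp 1 / real k * exp (- r / real k)" .
qed

end
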